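(* The space $X_{\mathrm{crs}}$ is not regular: the origin $x$ and the closed set $A=\bigcup_{n\ge1} e_n^0$ (which does not contain $x$) cannot be separated by disjoint open sets; indeed every open neighborhood of $x$ meets every open neighborhood of $A$.
   Context: Let $X$ be the following 2-dimensional CW-complex. Its 0-cells are $e_n^0$, $n\ge 0$; the point $x=e_0^0$ is called the origin. For each $n\ge1$ there are two 1-cells $e_n^1, e_{-n}^1$, each joining $x$ to $e_n^0$, so that $e_0^0\cup e_n^0\cup e_n^1\cup e_{-n}^1$ is homeomorphic to a circle; for each $n\ge1$ a 2-cell $e_n^2$ is attached via a homeomorphism $\varphi_n:S^1\to e_0^0\cup e_n^0\cup e_n^1\cup e_{-n}^1$. Thus each closed 2-cell $\overline{e_n^2}$ is a closed disk having $x$ and $e_n^0$ on its boundary, and $X$ is a wedge at $x$ of countably many closed disks, carrying the CW (weak) topology. The coarser topology on the set $X$ consists of all subsets $U\subset X$ that are open in the CW-topology and either do not contain $x$, or contain $\overline{e_n^2}\smallsetminus e_n^0$ for all but finitely many $n\ge1$. The set $X$ with this coarser topology is denoted $X_{\mathrm{crs}}$. *)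

theory Defs
  imports "HOL-Analysis.Analysis"
begin

text \<open>Points are of type (nat * complex) option: None is the origin x = e_0^0.
  The closed disk number n (n >= 1) is the closed unit disk cball 0 1 in the plane,
  whose boundary point -1 is glued to the origin; the boundary point 1 is the 0-cell e_n^0,
  the upper/lower open half circles are the 1-cells e_n^1, e_(-n)^1, and the open unit disk
  is the 2-cell e_n^2.\<close>

definition cw_pt :: "(nat \<times> complex) option set" where
  "cw_pt = {None} \<union> {Some (n, z) | n z. n \<ge> 1 \<and> z \<in> cball 0 1 \<and> z \<noteq> -1}"

definition disk_map :: "nat \<Rightarrow> complex \<Rightarrow> (nat \<times> complex) option" where
  "disk_map n z = (if z = -1 then None else Some (n, z))"

definition origin :: "(nat \<times> complex) option" where
  "origin = None"

definition vertex :: "nat \<Rightarrow> (nat \<times> complex) option" where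
  "vertex n = disk_map n 1"

definition disk_minus_vertex :: "nat \<Rightarrow> (nat \<times> complex) option set" where
  "disk_minus_vertex n = disk_map n ` (cball 0 1 - {1})"

definition cw_open :: "(nat \<times> complex) option set \<Rightarrow> bool" where
  "cw_open U \<longleftrightarrow> U \<subseteq> cw_pt \<and>
     (\<forall>n\<ge>1. openin (top_of_set (cball (0::complex) 1)) {z \<in> cball 0 1. disk_map n z \<in> U})"

definition crs_open :: "(nat \<times> complex) option set \<Rightarrow> bool" where
  "crs_open U \<longleftrightarrow> cw_open U \<and>
     (origin \<notin> U \<or> finite {n. n \<ge> 1 \<and> \<not> disk_minus_vertex n \<subseteq> U})"

definition X_crs :: "(nat \<times> complex) option topology" where
  "X_crs = topology crs_open"

end

theory Submission
  imports Defs
begin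

text \<open>An open neighbourhood of the origin contains the closed disk number n minus its vertex
  for all but finitely many n, so for at least one n. An open neighbourhood of that vertex
  contains a further point of the same disk, because no point of a connected set with more
  than one point is isolated in it. Hence the two neighbourhoods meet, while the set of
  vertices is closed and misses the origin.\<close>

lemma cw_open_Int:
  assumes "cw_open S" and "cw_open T"
  shows "cw_open (S \<inter> T)"
proof -
  have "{z \<in> cball 0 1. disk_map n z \<in> S \<inter> T} =
        {z \<in> cball 0 1. disk_map n z \<in> S} \<inter> {z \<in> cball 0 1. disk_map n z \<in> T}" for n
    by auto
  then show ?thesis
    using assms unfolding cw_open_def by (auto intro!: openin_Int)
qed

lemma cw_open_Union:
  assumes "\<forall>S\<in>\<K>. cw_open S"
  shows "cw_open (\<Union>\<K>)"
proof -
  have "{z \<in> cball 0 1. disk_map n z \<in> \<Union>\<K>} = (\<Union>S\<in>\<K>. {z \<in> cball 0 1. disk_map n z \<in> S})" for n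
    by auto
  then show ?thesis
    using assms unfolding cw_open_def by (auto intro!: openin_Union)
qed

lemma crs_open_Int:
  assumes "crs_open S" and "crs_open T"
  shows "crs_open (S \<inter> T)"
proof -
  have "{n. n \<ge> 1 \<and> \<not> disk_minus_vertex n \<subseteq> S \<inter> T} \<subseteq>
        {n. n \<ge> 1 \<and> \<not> disk_minus_vertex n \<subseteq> S} \<union> {n. n \<ge> 1 \<and> \<not> disk_minus_vertex n \<subseteq> T}"
    by auto
  with assms show ?thesis
    unfolding crs_open_def by (auto intro: cw_open_Int finite_subset)
qed

lemma crs_open_Union:
  assumes "\<forall>S\<in>\<K>. crs_open S"
  shows "crs_open (\<Union>\<K>)"
proof -
  have "finite {n. n \<ge> 1 \<and> \<not> disk_minus_vertex n \<subseteq> \<Union>\<K>}" if "origin \<in> S" "S \<in> \<K>" for S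
  proof (rule finite_subset)
    show "finite {n. n \<ge> 1 \<and> \<not> disk_minus_vertex n \<subseteq> S}"
      using assms that unfolding crs_open_def by blast
  qed (use that in auto)
  with assms show ?thesis
    unfolding crs_open_def by (auto intro: cw_open_Union)
qed

lemma istopology_crs_open: "istopology crs_open"
  unfolding istopology_def by (simp add: crs_open_Int crs_open_Union)

lemma openin_X_crs: "openin X_crs U \<longleftrightarrow> crs_open U"
  by (simp add: X_crs_def istopology_crs_open)

lemma crs_open_cw_pt: "crs_open cw_pt"
proof -
  have "{z \<in> cball 0 1. disk_map n z \<in> cw_pt} = cball 0 1" if "n \<ge> 1" for n
    using that by (auto simp: cw_pt_def disk_map_def)
  moreover have "{n. n \<ge> 1 \<and> \<not> disk_minus_vertex n \<subseteq> cw_pt} = {}"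
    by (auto simp: cw_pt_def disk_minus_vertex_def disk_map_def)
  moreover have "cw_pt \<subseteq> cw_pt" ..
  ultimately show ?thesis
    unfolding crs_open_def cw_open_def
    by (metis finite.emptyI openin_topspace topspace_euclidean_subtopology)
qed

lemma topspace_X_crs: "topspace X_crs = cw_pt"
proof
  show "topspace X_crs \<subseteq> cw_pt"
    by (auto simp: topspace_def openin_X_crs crs_open_def cw_open_def)
  show "cw_pt \<subseteq> topspace X_crs"
    using crs_open_cw_pt openin_X_crs openin_subset by blast
qed

definition vertices :: "(nat \<times> complex) option set" where
  "vertices = {vertex n | n. n \<ge> 1}"

lemma origin_notin_vertices: "origin \<notin> vertices"
  by (auto simp: vertices_def vertex_def disk_map_def origin_def)

lemma closedin_X_crs_vertices: "closedin X_crs vertices"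
proof -
  have "{z \<in> cball 0 1. disk_map n z \<in> cw_pt - vertices} = cball 0 1 - {1}" if "n \<ge> 1" for n
    using that by (auto simp: cw_pt_def disk_map_def vertices_def vertex_def)
  moreover have "{n. n \<ge> 1 \<and> \<not> disk_minus_vertex n \<subseteq> cw_pt - vertices} = {}"
    by (auto simp: cw_pt_def disk_minus_vertex_def disk_map_def vertices_def vertex_def)
  moreover have "openin (top_of_set (cball (0::complex) 1)) (cball 0 1 - {1})"
    by (simp add: openin_diff)
  moreover have "cw_pt - vertices \<subseteq> cw_pt" by blast
  ultimately have "crs_open (cw_pt - vertices)"
    unfolding crs_open_def cw_open_def by (metis finite.emptyI)
  moreover have "vertices \<subseteq> cw_pt"
    by (auto simp: vertices_def cw_pt_def vertex_def disk_map_def)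
  ultimately show ?thesis
    by (simp add: closedin_def topspace_X_crs openin_X_crs)
qed

lemma crs_open_origin_contains_disk_minus_vertex:
  assumes "crs_open U" and "origin \<in> U"
  obtains n where "n \<ge> 1" and "disk_minus_vertex n \<subseteq> U"
proof -
  have "finite {n. n \<ge> 1 \<and> \<not> disk_minus_vertex n \<subseteq> U}"
    using assms unfolding crs_open_def by blast
  then obtain k where "{n. n \<ge> 1 \<and> \<not> disk_minus_vertex n \<subseteq> U} \<subseteq> {..<k}"
    using finite_nat_bounded by blast
  then have "disk_minus_vertex (Suc k) \<subseteq> U"
    by (force dest: subsetD[of _ _ "Suc k"])
  then show thesis
    by (rule that[rotated]) simp
qed

lemma openin_islimpt_obtains_other:
  assumes "openin (top_of_set S) W" and "a \<in> W" and "a islimpt S"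
  obtains z where "z \<in> W" and "z \<noteq> a"
proof -
  obtain T where "open T" and "W = S \<inter> T"
    using assms(1) by (auto simp: openin_open)
  with assms(2,3) show thesis
    using that unfolding islimpt_def by blast
qed

lemma one_islimpt_unit_cball: "(1::complex) islimpt cball 0 1"
  by (rule connected_imp_perfect_aff_dim) (auto simp: aff_dim_cball)

lemma cw_open_vertex_meets_disk_minus_vertex:
  assumes "cw_open V" and "n \<ge> 1" and "vertex n \<in> V"
  shows "V \<inter> disk_minus_vertex n \<noteq> {}"
proof -
  have "openin (top_of_set (cball 0 1)) {z \<in> cball 0 1. disk_map n z \<in> V}"
    using assms(1,2) unfolding cw_open_def by blast
  moreover have "1 \<in> {z \<in> cball 0 1. disk_map n z \<in> V}"
    using assms(3) by (simp add: vertex_def)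
  ultimately obtain z where "z \<in> cball 0 1" "disk_map n z \<in> V" "z \<noteq> 1"
    using one_islimpt_unit_cball by (blast elim: openin_islimpt_obtains_other)
  then show ?thesis
    by (auto simp: disk_minus_vertex_def)
qed

lemma crs_open_origin_meets_vertices_nbhd:
  assumes "crs_open U" and "crs_open V" and "origin \<in> U" and "vertices \<subseteq> V"
  shows "U \<inter> V \<noteq> {}"
proof -
  obtain n where n: "n \<ge> 1" and "disk_minus_vertex n \<subseteq> U"
    using assms(1,3) by (rule crs_open_origin_contains_disk_minus_vertex)
  moreover have "V \<inter> disk_minus_vertex n \<noteq> {}"
  proof (rule cw_open_vertex_meets_disk_minus_vertex)
    show "cw_open V" using assms(2) by (simp add: crs_open_def)
    show "vertex n \<in> V" using assms(4) n by (auto simp: vertices_def)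
  qed (rule n)
  ultimately show ?thesis by blast
qed

theorem mainTheorem3:
  shows "\<not> regular_space X_crs
    \<and> closedin X_crs {vertex n | n. n \<ge> 1}
    \<and> origin \<notin> {vertex n | n. n \<ge> 1}
    \<and> (\<forall>U V. openin X_crs U \<and> openin X_crs V \<and> origin \<in> U
              \<and> {vertex n | n. n \<ge> 1} \<subseteq> V \<longrightarrow> U \<inter> V \<noteq> {})"
proof -
  have meet: "\<forall>U V. openin X_crs U \<and> openin X_crs V \<and> origin \<in> U
              \<and> vertices \<subseteq> V \<longrightarrow> U \<inter> V \<noteq> {}"
    using crs_open_origin_meets_vertices_nbhd by (simp add: openin_X_crs)
  have "origin \<in> topspace X_crs - vertices"
    using origin_notin_vertices by (simp add: topspace_X_crs cw_pt_def origin_def)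
  then have "\<not> regular_space X_crs"
    using meet closedin_X_crs_vertices unfolding regular_space_def disjnt_def by blast
  with meet show ?thesis
    using closedin_X_crs_vertices origin_notin_vertices unfolding vertices_def by blast
qed

end
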